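(* Let $M$ be a representation of $A$ and $L$ a vertex subrepresentation of $M$. Then $$\mathsf{F}_L(M)=\mathsf{F}_0(M/L)\cap\mathsf{F}_L(L).$$
   Context: $A=kQ/I$ finite-dimensional basic over algebraically closed $k$ of characteristic 0. $\mathsf{N}(M)$ is the convex hull in $\mathbb{R}^{Q_0}$ of dimension vectors of subrepresentations of $M$. For each vertex $\gamma$ of $\mathsf{N}(M)$ there is a unique subrepresentation of $M$ of dimension $\gamma$, called a vertex subrepresentation. For a vertex subrepresentation $L$ of $M$, $\mathsf{F}_L(M)$ denotes the dual (normal) cone of the vertex $\underline{\dim}L$: the cone of $\delta\in\mathbb{R}^{Q_0}$ with $\delta(\underline{\dim}L)=\max_{x\in\mathsf{N}(M)}\delta(x)$, where $\delta(\gamma)=\sum_v\delta(v)\gamma(v)$. Thus $\mathsf{F}_0(N)$ and $\mathsf{F}_N(N)$ are the dual cones of the vertices $0$ and $\underline{\dim}N$ of $\mathsf{N}(N)$. *)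

theory Defs
  imports "HOL-Analysis.Analysis" "HOL-Computational_Algebra.Polynomial"
begin

text \<open>Finite quiver: vertices = UNIV of a finite type 'q, arrows = UNIV of a finite
type 'e, with source/target maps src, tgt.  A path is a triple (x, y, ps):
start vertex x, end vertex y, list of arrows ps (first arrow first).\<close>

definition valid_path :: "('e \<Rightarrow> 'q) \<Rightarrow> ('e \<Rightarrow> 'q) \<Rightarrow> 'q \<times> 'q \<times> 'e list \<Rightarrow> bool" where
  "valid_path src tgt p = (case p of (x, y, ps) \<Rightarrow>
     (ps = [] \<longrightarrow> x = y) \<and>
     (ps \<noteq> [] \<longrightarrow> src (hd ps) = x \<and> tgt (last ps) = y \<and>
        (\<forall>i. Suc i < length ps \<longrightarrow> tgt (ps ! i) = src (ps ! Suc i))))"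

text \<open>Elements of the path algebra kQ: finitely supported k-linear combinations of paths.\<close>
definition path_elem :: "('e \<Rightarrow> 'q) \<Rightarrow> ('e \<Rightarrow> 'q) \<Rightarrow> ('q \<times> 'q \<times> 'e list \<Rightarrow> 'k::field) \<Rightarrow> bool" where
  "path_elem src tgt f \<longleftrightarrow> finite {p. f p \<noteq> 0} \<and> (\<forall>p. f p \<noteq> 0 \<longrightarrow> valid_path src tgt p)"

text \<open>Multiplication in kQ (concatenation of paths: first f, then g).\<close>
definition pmult :: "('q::finite \<times> 'q \<times> 'e list \<Rightarrow> 'k::field) \<Rightarrow> ('q \<times> 'q \<times> 'e list \<Rightarrow> 'k)
    \<Rightarrow> 'q \<times> 'q \<times> 'e list \<Rightarrow> 'k" where
  "pmult f g p = (case p of (x, y, ps) \<Rightarrow>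
     (\<Sum>z\<in>UNIV. \<Sum>i\<in>{0..length ps}. f (x, z, take i ps) * g (z, y, drop i ps)))"

definition path_ideal :: "('e \<Rightarrow> 'q::finite) \<Rightarrow> ('e \<Rightarrow> 'q) \<Rightarrow> ('q \<times> 'q \<times> 'e list \<Rightarrow> 'k::field) set \<Rightarrow> bool" where
  "path_ideal src tgt I \<longleftrightarrow>
     (\<forall>f\<in>I. path_elem src tgt f) \<and> (\<lambda>_. 0) \<in> I \<and>
     (\<forall>f\<in>I. \<forall>g\<in>I. (\<lambda>p. f p + g p) \<in> I) \<and>
     (\<forall>f\<in>I. \<forall>c. (\<lambda>p. c * f p) \<in> I) \<and>
     (\<forall>f\<in>I. \<forall>g. path_elem src tgt g \<longrightarrow> pmult f g \<in> I \<and> pmult g f \<in> I)"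

text \<open>Admissible ideal: R^m \<subseteq> I \<subseteq> R^2, R the arrow ideal (R^m = span of paths of length \<ge> m).\<close>
definition admissible_ideal :: "('e \<Rightarrow> 'q::finite) \<Rightarrow> ('e \<Rightarrow> 'q) \<Rightarrow> ('q \<times> 'q \<times> 'e list \<Rightarrow> 'k::field) set \<Rightarrow> bool" where
  "admissible_ideal src tgt I \<longleftrightarrow> path_ideal src tgt I \<and>
     (\<exists>m\<ge>2. \<forall>f. path_elem src tgt f \<and> (\<forall>x y ps. f (x, y, ps) \<noteq> 0 \<longrightarrow> length ps \<ge> m) \<longrightarrow> f \<in> I) \<and>
     (\<forall>f\<in>I. \<forall>x y ps. f (x, y, ps) \<noteq> 0 \<longrightarrow> length ps \<ge> 2)"

text \<open>A representation (M, phi): finite-dimensional subspaces M v of an ambient k-vector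
space, linear maps phi a : M (src a) \<rightarrow> M (tgt a).\<close>

definition path_map :: "('e \<Rightarrow> 'm \<Rightarrow> 'm) \<Rightarrow> 'e list \<Rightarrow> 'm \<Rightarrow> 'm" where
  "path_map phi ps = fold (\<lambda>a g. phi a \<circ> g) ps id"

definition is_quiver_rep :: "('k::field \<Rightarrow> 'm::ab_group_add \<Rightarrow> 'm) \<Rightarrow> ('e \<Rightarrow> 'q) \<Rightarrow> ('e \<Rightarrow> 'q)
    \<Rightarrow> ('q \<Rightarrow> 'm set) \<Rightarrow> ('e \<Rightarrow> 'm \<Rightarrow> 'm) \<Rightarrow> bool" where
  "is_quiver_rep smul src tgt M phi \<longleftrightarrow>
     (\<forall>v. module.subspace smul (M v) \<and>
          (\<exists>B. finite B \<and> B \<subseteq> M v \<and> module.span smul B = M v)) \<and>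
     (\<forall>a. phi a ` M (src a) \<subseteq> M (tgt a) \<and>
          (\<forall>x\<in>M (src a). \<forall>y\<in>M (src a). phi a (x + y) = phi a x + phi a y) \<and>
          (\<forall>c. \<forall>x\<in>M (src a). phi a (smul c x) = smul c (phi a x)))"

text \<open>A representation of A = kQ/I: a representation of Q annihilated by I.\<close>
definition is_rep :: "('k::field \<Rightarrow> 'm::ab_group_add \<Rightarrow> 'm) \<Rightarrow> ('e \<Rightarrow> 'q) \<Rightarrow> ('e \<Rightarrow> 'q)
    \<Rightarrow> ('q \<times> 'q \<times> 'e list \<Rightarrow> 'k) set \<Rightarrow> ('q \<Rightarrow> 'm set) \<Rightarrow> ('e \<Rightarrow> 'm \<Rightarrow> 'm) \<Rightarrow> bool" where
  "is_rep smul src tgt I M phi \<longleftrightarrow> is_quiver_rep smul src tgt M phi \<and>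
     (\<forall>f\<in>I. \<forall>x y. \<forall>m\<in>M x.
        (\<Sum>ps\<in>{ps. f (x, y, ps) \<noteq> 0}. smul (f (x, y, ps)) (path_map phi ps m)) = 0)"

definition subrep :: "('k::field \<Rightarrow> 'm::ab_group_add \<Rightarrow> 'm) \<Rightarrow> ('e \<Rightarrow> 'q) \<Rightarrow> ('e \<Rightarrow> 'q)
    \<Rightarrow> ('q \<Rightarrow> 'm set) \<Rightarrow> ('e \<Rightarrow> 'm \<Rightarrow> 'm) \<Rightarrow> ('q \<Rightarrow> 'm set) \<Rightarrow> bool" where
  "subrep smul src tgt M phi U \<longleftrightarrow>
     (\<forall>v. module.subspace smul (U v) \<and> U v \<subseteq> M v) \<and>
     (\<forall>a. phi a ` U (src a) \<subseteq> U (tgt a))"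

definition dimvec :: "('k::field \<Rightarrow> 'm::ab_group_add \<Rightarrow> 'm) \<Rightarrow> ('q::finite \<Rightarrow> 'm set) \<Rightarrow> real ^ 'q" where
  "dimvec smul U = (\<chi> v. real (vector_space.dim smul (U v)))"

definition newton :: "('k::field \<Rightarrow> 'm::ab_group_add \<Rightarrow> 'm) \<Rightarrow> ('e \<Rightarrow> 'q::finite) \<Rightarrow> ('e \<Rightarrow> 'q)
    \<Rightarrow> ('q \<Rightarrow> 'm set) \<Rightarrow> ('e \<Rightarrow> 'm \<Rightarrow> 'm) \<Rightarrow> (real ^ 'q) set" where
  "newton smul src tgt M phi = convex hull {dimvec smul U | U. subrep smul src tgt M phi U}"

definition normal_cone :: "('k::field \<Rightarrow> 'm::ab_group_add \<Rightarrow> 'm) \<Rightarrow> ('e \<Rightarrow> 'q::finite) \<Rightarrow> ('e \<Rightarrow> 'q)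
    \<Rightarrow> ('q \<Rightarrow> 'm set) \<Rightarrow> ('e \<Rightarrow> 'm \<Rightarrow> 'm) \<Rightarrow> real ^ 'q \<Rightarrow> (real ^ 'q) set" where
  "normal_cone smul src tgt M phi \<gamma> =
     {\<delta>. \<forall>x\<in>newton smul src tgt M phi. \<delta> \<bullet> x \<le> \<delta> \<bullet> \<gamma>}"

definition vertex_subrep :: "('k::field \<Rightarrow> 'm::ab_group_add \<Rightarrow> 'm) \<Rightarrow> ('e \<Rightarrow> 'q::finite) \<Rightarrow> ('e \<Rightarrow> 'q)
    \<Rightarrow> ('q \<Rightarrow> 'm set) \<Rightarrow> ('e \<Rightarrow> 'm \<Rightarrow> 'm) \<Rightarrow> ('q \<Rightarrow> 'm set) \<Rightarrow> bool" where
  "vertex_subrep smul src tgt M phi L \<longleftrightarrow> subrep smul src tgt M phi L \<and>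
     dimvec smul L extreme_point_of newton smul src tgt M phi"

text \<open>Quotient representation M/L, realised (up to isomorphism) on a chosen complement
C v of L v in M v, with maps phi a followed by the projection onto C (tgt a) along L (tgt a).\<close>
definition qspace :: "('k::field \<Rightarrow> 'm::ab_group_add \<Rightarrow> 'm) \<Rightarrow> ('q \<Rightarrow> 'm set) \<Rightarrow> ('q \<Rightarrow> 'm set) \<Rightarrow> 'q \<Rightarrow> 'm set" where
  "qspace smul M L v = (SOME C. module.subspace smul C \<and> C \<subseteq> M v \<and> C \<inter> L v = {0} \<and>
        (\<forall>m\<in>M v. \<exists>c\<in>C. \<exists>l\<in>L v. m = c + l))"

definition qproj :: "('k::field \<Rightarrow> 'm::ab_group_add \<Rightarrow> 'm) \<Rightarrow> ('q \<Rightarrow> 'm set) \<Rightarrow> ('q \<Rightarrow> 'm set) \<Rightarrow> 'q \<Rightarrow> 'm \<Rightarrow> 'm" where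
  "qproj smul M L v m = (THE c. c \<in> qspace smul M L v \<and> m - c \<in> L v)"

definition qmap :: "('k::field \<Rightarrow> 'm::ab_group_add \<Rightarrow> 'm) \<Rightarrow> ('e \<Rightarrow> 'q) \<Rightarrow> ('q \<Rightarrow> 'm set)
    \<Rightarrow> ('e \<Rightarrow> 'm \<Rightarrow> 'm) \<Rightarrow> ('q \<Rightarrow> 'm set) \<Rightarrow> 'e \<Rightarrow> 'm \<Rightarrow> 'm" where
  "qmap smul tgt M phi L a c = qproj smul M L (tgt a) (phi a c)"

end

theory Submission imports Defs begin

text \<open>A subrepresentation V of M/L lifts to the subrepresentation V + L of M, of dimension
vector \<open>dim V + dim L\<close>; conversely every subrepresentation U of M splits as
\<open>dim U = dim (U \<inter> L) + dim ((U + L)/L)\<close>, with \<open>U \<inter> L\<close> a subrepresentation of L and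
\<open>(U + L)/L\<close> one of M/L. Hence a linear functional is maximised over the subrepresentations
of M at L exactly when it is maximised at 0 over those of M/L and at L over those of L.\<close>

context vector_space begin

lemma span_Int_span_disjoint_subsets:
  assumes "independent B" "finite B" "X \<subseteq> B" "Y \<subseteq> B" "X \<inter> Y = {}"
  shows "span X \<inter> span Y \<subseteq> {0}"
proof
  fix x assume "x \<in> span X \<inter> span Y"
  have fX: "finite X" "finite Y" using assms(2,3,4) by (auto intro: finite_subset)
  obtain u where u: "x = (\<Sum>v\<in>X. u v *s v)"
    using \<open>x \<in> span X \<inter> span Y\<close> span_finite[OF fX(1)] by auto
  obtain w where w: "x = (\<Sum>v\<in>Y. w v *s v)"
    using \<open>x \<in> span X \<inter> span Y\<close> span_finite[OF fX(2)] by auto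
  define g where "g v = (if v \<in> X then u v else - w v)" for v
  have "(\<Sum>v\<in>X \<union> Y. g v *s v) = (\<Sum>v\<in>X. g v *s v) + (\<Sum>v\<in>Y. g v *s v)"
    using fX assms(5) by (simp add: sum.union_disjoint)
  also have "(\<Sum>v\<in>X. g v *s v) = x" unfolding u g_def by (rule sum.cong) auto
  also have "(\<Sum>v\<in>Y. g v *s v) = (\<Sum>v\<in>Y. - (w v *s v))"
    using assms(5) by (intro sum.cong) (auto simp: g_def)
  also have "\<dots> = - x" by (simp add: sum_negf w)
  finally have "(\<Sum>v\<in>X \<union> Y. g v *s v) = 0" by simp
  then have "\<forall>v\<in>X. u v = 0"
    using independentD[OF assms(1), of "X \<union> Y" g] fX assms(3,4) by (force simp: g_def)
  thus "x \<in> {0}" unfolding u by simp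
qed

lemma independent_Un_if_span_Int:
  assumes "independent A" "independent B" "finite A" "finite B"
    and "span A \<inter> span B \<subseteq> {0}"
  shows "independent (A \<union> B)" "A \<inter> B = {}"
proof -
  show disj: "A \<inter> B = {}"
  proof (rule ccontr)
    assume "A \<inter> B \<noteq> {}"
    then obtain v where "v \<in> A" "v \<in> B" by auto
    hence "v = 0" using assms(5) span_base by blast
    thus False using \<open>v \<in> A\<close> assms(1) dependent_zero by blast
  qed
  show "independent (A \<union> B)"
  proof (rule independent_if_scalars_zero)
    show "finite (A \<union> B)" using assms by auto
    fix f x assume s: "(\<Sum>x\<in>A \<union> B. f x *s x) = 0" and x: "x \<in> A \<union> B"
    have "(\<Sum>x\<in>A \<union> B. f x *s x) = (\<Sum>x\<in>A. f x *s x) + (\<Sum>x\<in>B. f x *s x)"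
      using assms disj by (simp add: sum.union_disjoint)
    hence e: "(\<Sum>x\<in>A. f x *s x) = - (\<Sum>x\<in>B. f x *s x)"
      using s by (simp add: eq_neg_iff_add_eq_0)
    have "(\<Sum>x\<in>A. f x *s x) \<in> span A" by (simp add: span_base span_scale span_sum)
    moreover have "(\<Sum>x\<in>A. f x *s x) \<in> span B" unfolding e
      by (simp add: span_base span_scale span_sum span_neg)
    ultimately have a0: "(\<Sum>x\<in>A. f x *s x) = 0" using assms(5) by blast
    hence b0: "(\<Sum>x\<in>B. f x *s x) = 0" using e by simp
    show "f x = 0" using x independentD[OF assms(1) assms(3) order_refl a0, of x]
      independentD[OF assms(2) assms(4) order_refl b0, of x] by blast
  qed
qed

lemma dim_sums_eq_add_dim:
  assumes "subspace S" "subspace T" "S \<subseteq> span F" "T \<subseteq> span F" "finite F"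
    and "S \<inter> T \<subseteq> {0}"
  shows "dim {x + y |x y. x \<in> S \<and> y \<in> T} = dim S + dim T"
proof -
  obtain A where A: "A \<subseteq> S" "independent A" "S \<subseteq> span A" "card A = dim S"
    by (rule basis_exists)
  obtain B where B: "B \<subseteq> T" "independent B" "T \<subseteq> span B" "card B = dim T"
    by (rule basis_exists)
  have fin: "finite A" "finite B"
    using independent_span_bound[OF assms(5)] A B assms(3,4) by auto
  have spans: "span A = S" "span B = T"
    using span_subspace A B assms(1,2) by auto
  have AB: "independent (A \<union> B)" "A \<inter> B = {}"
    using independent_Un_if_span_Int[OF A(2) B(2) fin] assms(6) unfolding spans by simp_all
  have "span (A \<union> B) = {x + y |x y. x \<in> S \<and> y \<in> T}"
    using span_Un[of A B] spans by simp
  then have "dim {x + y |x y. x \<in> S \<and> y \<in> T} = card (A \<union> B)"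
    using dim_eq_card[OF _ AB(1)] span_eq_iff subspace_sums[OF assms(1,2)] by metis
  also have "\<dots> = dim S + dim T" using card_Un_disjoint[OF fin AB(2)] A B by simp
  finally show ?thesis .
qed

lemma subspace_complement_exists:
  assumes "subspace S" "subspace U" "S \<subseteq> U" "U \<subseteq> span F" "finite F"
  obtains D where "subspace D" "D \<subseteq> U" "D \<inter> S \<subseteq> {0}"
    "{x + y |x y. x \<in> D \<and> y \<in> S} = U"
proof -
  obtain B0 where B0: "B0 \<subseteq> S" "independent B0" "S \<subseteq> span B0"
    by (rule basis_exists)
  obtain B where B: "B0 \<subseteq> B" "B \<subseteq> U" "independent B" "U \<subseteq> span B"
    using maximal_independent_subset_extend[OF _ B0(2)] B0(1) assms(3) by (metis order.trans)
  have "finite B" using independent_span_bound[OF assms(5) B(3)] B(2) assms(4) by auto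
  have spans: "span B0 = S" "span B = U"
    using span_subspace B0 B assms(1,2) by auto
  have "span (B - B0) \<subseteq> U" using span_mono[of "B - B0" B] spans by blast
  moreover have "span (B - B0) \<inter> S \<subseteq> {0}"
    using span_Int_span_disjoint_subsets[OF B(3) \<open>finite B\<close>, of "B - B0" B0] B(1) spans
    by blast
  moreover have "{x + y |x y. x \<in> span (B - B0) \<and> y \<in> S} = U"
    using span_Un[of "B - B0" B0] spans B(1) by (simp add: Un_absorb2)
  ultimately show ?thesis using that[of "span (B - B0)"] by simp
qed

text \<open>The dimension formula \<open>dim U = dim (U \<inter> L) + dim ((U + L)/L)\<close>, with the quotient
realised by a complement V of L in U + L.\<close>

lemma dim_eq_dim_Int_add_dim_complement:
  assumes "subspace U" "subspace L" "subspace V" "finite F"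
    and "U \<subseteq> span F" "L \<subseteq> span F" "V \<subseteq> span F"
    and "V \<inter> L \<subseteq> {0}"
    and "{x + y |x y. x \<in> V \<and> y \<in> L} = {x + y |x y. x \<in> U \<and> y \<in> L}"
  shows "dim U = dim (U \<inter> L) + dim V"
proof -
  have UL: "subspace (U \<inter> L)" using subspace_inter assms(1,2) by blast
  obtain D where D: "subspace D" "D \<subseteq> U" "D \<inter> (U \<inter> L) \<subseteq> {0}"
    "{x + y |x y. x \<in> D \<and> y \<in> U \<inter> L} = U"
    using subspace_complement_exists[OF UL assms(1) _ assms(5,4)] by blast
  have DF: "D \<subseteq> span F" using D(2) assms(5) by blast
  have "U \<inter> L \<subseteq> span F" using assms(5) by blast
  from dim_sums_eq_add_dim[OF D(1) UL DF this assms(4) D(3)]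
  have dimU: "dim U = dim D + dim (U \<inter> L)" unfolding D(4) .
  have "{x + y |x y. x \<in> D \<and> y \<in> L} = {x + y |x y. x \<in> U \<and> y \<in> L}"
  proof (intro equalityI subsetI)
    fix z assume "z \<in> {x + y |x y. x \<in> U \<and> y \<in> L}"
    then obtain x y where z: "z = x + y" "x \<in> U" "y \<in> L" by blast
    then obtain d s where ds: "x = d + s" "d \<in> D" "s \<in> U \<inter> L" using D(4) by blast
    have "s + y \<in> L" using subspace_add[OF assms(2)] ds(3) z(3) by blast
    moreover have "z = d + (s + y)" using z(1) ds(1) by (simp add: add.assoc)
    ultimately show "z \<in> {x + y |x y. x \<in> D \<and> y \<in> L}" using ds(2) by blast
  qed (use D(2) in blast)
  moreover have "D \<inter> L \<subseteq> {0}" using D(2,3) by blast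
  ultimately have "dim D + dim L = dim V + dim L"
    using dim_sums_eq_add_dim[OF D(1) assms(2) DF assms(6,4)]
      dim_sums_eq_add_dim[OF assms(3,2,7,6,4,8)] assms(9) by simp
  with dimU show ?thesis by simp
qed

end

lemma normal_cone_iff_subrep:
  "\<delta> \<in> normal_cone smul src tgt M phi \<gamma> \<longleftrightarrow>
     (\<forall>U. subrep smul src tgt M phi U \<longrightarrow> \<delta> \<bullet> dimvec smul U \<le> \<delta> \<bullet> \<gamma>)"
proof -
  let ?G = "{dimvec smul U | U. subrep smul src tgt M phi U}"
  have "convex hull ?G \<subseteq> {x. \<delta> \<bullet> x \<le> \<delta> \<bullet> \<gamma>} \<longleftrightarrow> ?G \<subseteq> {x. \<delta> \<bullet> x \<le> \<delta> \<bullet> \<gamma>}"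
    using hull_subset[of ?G convex] convex_halfspace_le[of \<delta> "\<delta> \<bullet> \<gamma>"]
    by (meson hull_minimal order.trans)
  then show ?thesis unfolding normal_cone_def newton_def by blast
qed

locale quiver_rep_with_subrep = vector_space smul
  for smul :: "'k::field \<Rightarrow> 'm::ab_group_add \<Rightarrow> 'm" +
  fixes src tgt :: "'e \<Rightarrow> 'q::finite" and M L :: "'q \<Rightarrow> 'm set" and phi :: "'e \<Rightarrow> 'm \<Rightarrow> 'm"
  assumes rep: "is_quiver_rep smul src tgt M phi"
    and subrep_L: "subrep smul src tgt M phi L"
begin

abbreviation "C \<equiv> qspace smul M L"
abbreviation "P \<equiv> qproj smul M L"
abbreviation "Q \<equiv> qmap smul tgt M phi L"

lemma subspace_M: "subspace (M v)"
  and phi_M: "x \<in> M (src a) \<Longrightarrow> phi a x \<in> M (tgt a)"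
  and phi_add: "x \<in> M (src a) \<Longrightarrow> y \<in> M (src a) \<Longrightarrow> phi a (x + y) = phi a x + phi a y"
  using rep unfolding is_quiver_rep_def image_subset_iff by simp_all

lemma M_finite_span: obtains F where "finite F" "M v \<subseteq> span F"
  using rep unfolding is_quiver_rep_def by (metis order.refl)

lemma subspace_L: "subspace (L v)" and L_M: "L v \<subseteq> M v"
  and phi_L: "x \<in> L (src a) \<Longrightarrow> phi a x \<in> L (tgt a)"
  using subrep_L unfolding subrep_def image_subset_iff by simp_all

lemma qspace_complement:
  "subspace (C v) \<and> C v \<subseteq> M v \<and> C v \<inter> L v = {0} \<and> (\<forall>m\<in>M v. \<exists>c\<in>C v. \<exists>l\<in>L v. m = c + l)"
  unfolding qspace_def
proof (rule someI_ex)
  obtain F where F: "finite F" "M v \<subseteq> span F" by (rule M_finite_span)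
  obtain D where D: "subspace D" "D \<subseteq> M v" "D \<inter> L v \<subseteq> {0}"
    "{x + y |x y. x \<in> D \<and> y \<in> L v} = M v"
    by (rule subspace_complement_exists[OF subspace_L subspace_M L_M F(2,1)])
  then have "D \<inter> L v = {0}" using subspace_0[OF D(1)] subspace_0[OF subspace_L] by auto
  moreover have "\<forall>m\<in>M v. \<exists>c\<in>D. \<exists>l\<in>L v. m = c + l" using D(4) by blast
  ultimately show "\<exists>C. subspace C \<and> C \<subseteq> M v \<and> C \<inter> L v = {0} \<and>
      (\<forall>m\<in>M v. \<exists>c\<in>C. \<exists>l\<in>L v. m = c + l)" using D(1,2) by blast
qed

lemma subspace_C: "subspace (C v)" and C_M: "C v \<subseteq> M v" and C_Int_L: "C v \<inter> L v = {0}"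
  and C_decomp: "m \<in> M v \<Longrightarrow> \<exists>c\<in>C v. \<exists>l\<in>L v. m = c + l"
  using qspace_complement[of v] by auto

lemma qproj_unique: assumes "c \<in> C v" "m - c \<in> L v" shows "P v m = c"
  unfolding qproj_def
proof (rule the_equality)
  fix c' assume c': "c' \<in> C v \<and> m - c' \<in> L v"
  have "(m - c) - (m - c') \<in> L v" using c' by (intro subspace_diff[OF subspace_L assms(2)]) simp
  moreover have "c' - c = (m - c) - (m - c')" by (simp add: algebra_simps)
  ultimately have "c' - c \<in> L v" by (simp only:)
  moreover have "c' - c \<in> C v" using subspace_diff[OF subspace_C] c' assms(1) by simp
  ultimately have "c' - c \<in> {0}" using C_Int_L[of v] by blast
  thus "c' = c" by simp
qed (use assms in simp)

lemma
  assumes "m \<in> M v"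
  shows qproj_in_C: "P v m \<in> C v" and diff_qproj_in_L: "m - P v m \<in> L v"
proof -
  obtain c l where cl: "c \<in> C v" "l \<in> L v" "m = c + l" using C_decomp[OF assms] by blast
  then have "P v m = c" using qproj_unique by simp
  thus "P v m \<in> C v" "m - P v m \<in> L v" using cl by auto
qed

lemma qproj_add: assumes "x \<in> M v" "y \<in> M v" shows "P v (x + y) = P v x + P v y"
proof (rule qproj_unique)
  show "P v x + P v y \<in> C v" using subspace_add[OF subspace_C] qproj_in_C assms by blast
  have "x + y - (P v x + P v y) = (x - P v x) + (y - P v y)" by (simp add: algebra_simps)
  thus "x + y - (P v x + P v y) \<in> L v"
    using subspace_add[OF subspace_L] diff_qproj_in_L assms by metis
qed

lemma qproj_scale: assumes "x \<in> M v" shows "P v (smul c x) = smul c (P v x)"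
proof (rule qproj_unique)
  show "smul c (P v x) \<in> C v" using subspace_scale[OF subspace_C] qproj_in_C assms by blast
  have "smul c x - smul c (P v x) = smul c (x - P v x)" by (simp add: scale_right_diff_distrib)
  thus "smul c x - smul c (P v x) \<in> L v"
    using subspace_scale[OF subspace_L] diff_qproj_in_L assms by metis
qed

lemma qproj_L: "l \<in> L v \<Longrightarrow> P v l = 0"
  by (rule qproj_unique) (simp_all add: subspace_0[OF subspace_C])

lemma sums_qproj_image:
  assumes "X \<subseteq> M v"
  shows "{x + y |x y. x \<in> P v ` X \<and> y \<in> L v} = {x + y |x y. x \<in> X \<and> y \<in> L v}"
proof (intro equalityI subsetI)
  fix z assume "z \<in> {x + y |x y. x \<in> P v ` X \<and> y \<in> L v}"
  then obtain u y where z: "z = P v u + y" "u \<in> X" "y \<in> L v" by blast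
  have "y - (u - P v u) \<in> L v"
    using subspace_diff[OF subspace_L z(3) diff_qproj_in_L] z(2) assms by blast
  moreover have "z = u + (y - (u - P v u))" using z(1) by (simp add: algebra_simps)
  ultimately show "z \<in> {x + y |x y. x \<in> X \<and> y \<in> L v}" using z(2) by blast
next
  fix z assume "z \<in> {x + y |x y. x \<in> X \<and> y \<in> L v}"
  then obtain x y where z: "z = x + y" "x \<in> X" "y \<in> L v" by blast
  have "(x - P v x) + y \<in> L v"
    using subspace_add[OF subspace_L diff_qproj_in_L z(3)] z(2) assms by blast
  moreover have "z = P v x + ((x - P v x) + y)" using z(1) by (simp add: algebra_simps)
  ultimately show "z \<in> {x + y |x y. x \<in> P v ` X \<and> y \<in> L v}" using z(2) by blast
qed

lemma subrep_of_subrep_L: "subrep smul src tgt L phi U \<Longrightarrow> subrep smul src tgt M phi U"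
  unfolding subrep_def using L_M by (meson order.trans)

lemma subrep_sums_L_of_quotient_subrep:
  assumes "subrep smul src tgt C Q V"
  shows "subrep smul src tgt M phi (\<lambda>v. {x + y |x y. x \<in> V v \<and> y \<in> L v})"
proof -
  have V: "\<And>v. subspace (V v)" "\<And>v. V v \<subseteq> M v" "\<And>a x. x \<in> V (src a) \<Longrightarrow> Q a x \<in> V (tgt a)"
    using assms C_M unfolding subrep_def by blast+
  have "phi a (x + y) \<in> {x + y |x y. x \<in> V (tgt a) \<and> y \<in> L (tgt a)}"
    if "x \<in> V (src a)" "y \<in> L (src a)" for a x y
  proof -
    have xM: "x \<in> M (src a)" and yM: "y \<in> M (src a)" using that V(2) L_M by blast+
    have "(phi a x - Q a x) + phi a y \<in> L (tgt a)"
      using subspace_add[OF subspace_L diff_qproj_in_L[OF phi_M[OF xM]] phi_L[OF that(2)]]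
      by (simp add: qmap_def)
    moreover have "phi a (x + y) = Q a x + ((phi a x - Q a x) + phi a y)"
      using phi_add[OF xM yM] by (simp add: algebra_simps)
    ultimately show ?thesis using V(3)[OF that(1)] by blast
  qed
  moreover have "x + y \<in> M v" if "x \<in> V v" "y \<in> L v" for v x y
    using subspace_add[OF subspace_M] that V(2) L_M by blast
  ultimately show ?thesis
    unfolding subrep_def using subspace_sums[OF V(1) subspace_L] by blast
qed

lemma lift_quotient_subrep:
  assumes "subrep smul src tgt C Q V"
  obtains W where "subrep smul src tgt M phi W" "dimvec smul W = dimvec smul V + dimvec smul L"
proof -
  have "dim {x + y |x y. x \<in> V v \<and> y \<in> L v} = dim (V v) + dim (L v)" for v
  proof -
    obtain F where F: "finite F" "M v \<subseteq> span F" by (rule M_finite_span)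
    have V: "subspace (V v)" "V v \<subseteq> C v" using assms unfolding subrep_def by blast+
    have "V v \<subseteq> span F" "L v \<subseteq> span F" using V(2) C_M L_M F(2) by blast+
    moreover have "V v \<inter> L v \<subseteq> {0}" using V(2) C_Int_L[of v] by blast
    ultimately show ?thesis by (rule dim_sums_eq_add_dim[OF V(1) subspace_L _ _ F(1)])
  qed
  then show ?thesis
    using that subrep_sums_L_of_quotient_subrep[OF assms] by (simp add: dimvec_def vec_eq_iff)
qed

lemma quotient_subrep_qproj_image:
  assumes "subrep smul src tgt M phi U"
  shows "subrep smul src tgt C Q (\<lambda>v. P v ` U v)"
proof -
  have U: "\<And>v. subspace (U v)" "\<And>v. U v \<subseteq> M v" "\<And>a x. x \<in> U (src a) \<Longrightarrow> phi a x \<in> U (tgt a)"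
    using assms unfolding subrep_def image_subset_iff by simp_all
  have UM: "u \<in> U v \<Longrightarrow> u \<in> M v" for u v using U(2) by blast
  have "subspace (P v ` U v)" for v
  proof (rule subspaceI)
    have "P v 0 = 0" by (rule qproj_L[OF subspace_0[OF subspace_L]])
    then show "0 \<in> P v ` U v" using subspace_0[OF U(1)] by (metis image_eqI)
  next
    fix x y assume "x \<in> P v ` U v" "y \<in> P v ` U v"
    then obtain u w where uw: "u \<in> U v" "w \<in> U v" "x = P v u" "y = P v w" by blast
    then have "x + y = P v (u + w)" using qproj_add[OF UM UM] by simp
    then show "x + y \<in> P v ` U v" using subspace_add[OF U(1) uw(1,2)] by simp
  next
    fix c x assume "x \<in> P v ` U v"
    then obtain u where u: "u \<in> U v" "x = P v u" by blast
    then have "smul c x = P v (smul c u)" using qproj_scale[OF UM] by simp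
    then show "smul c x \<in> P v ` U v" using subspace_scale[OF U(1) u(1)] by simp
  qed
  moreover have "Q a (P (src a) u) \<in> P (tgt a) ` U (tgt a)" if "u \<in> U (src a)" for a u
  proof -
    define x where "x = P (src a) u"
    define l where "l = u - x"
    have uM: "u \<in> M (src a)" using UM[OF that] .
    have xM: "x \<in> M (src a)" unfolding x_def using qproj_in_C[OF uM] C_M by blast
    have lL: "l \<in> L (src a)" unfolding l_def x_def using diff_qproj_in_L[OF uM] .
    have lM: "l \<in> M (src a)" using lL L_M by blast
    have "phi a u = phi a x + phi a l" using phi_add[OF xM lM] by (simp add: l_def)
    also have "P (tgt a) \<dots> = P (tgt a) (phi a x) + P (tgt a) (phi a l)"
      by (rule qproj_add[OF phi_M[OF xM] phi_M[OF lM]])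
    also have "\<dots> = Q a x" using qproj_L[OF phi_L[OF lL]] by (simp add: qmap_def)
    finally show ?thesis using U(3)[OF that] unfolding x_def by (metis image_eqI)
  qed
  moreover have "P v ` U v \<subseteq> C v" for v using qproj_in_C UM by blast
  ultimately show ?thesis unfolding subrep_def by (auto simp: image_subset_iff)
qed

lemma split_subrep:
  assumes "subrep smul src tgt M phi U"
  obtains U' V where "subrep smul src tgt L phi U'" "subrep smul src tgt C Q V"
    "dimvec smul U = dimvec smul U' + dimvec smul V"
proof -
  have U: "\<And>v. subspace (U v)" "\<And>v. U v \<subseteq> M v" "\<And>a x. x \<in> U (src a) \<Longrightarrow> phi a x \<in> U (tgt a)"
    using assms unfolding subrep_def by blast+
  have U': "subrep smul src tgt L phi (\<lambda>v. U v \<inter> L v)"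
    unfolding subrep_def using subspace_inter[OF U(1) subspace_L] U(3) phi_L by auto
  have V: "subrep smul src tgt C Q (\<lambda>v. P v ` U v)"
    by (rule quotient_subrep_qproj_image[OF assms])
  have "dim (U v) = dim (U v \<inter> L v) + dim (P v ` U v)" for v
  proof -
    obtain F where F: "finite F" "M v \<subseteq> span F" by (rule M_finite_span)
    have PU: "subspace (P v ` U v)" "P v ` U v \<subseteq> C v"
      using V unfolding subrep_def by blast+
    have spanF: "U v \<subseteq> span F" "L v \<subseteq> span F" "P v ` U v \<subseteq> span F"
      using F(2) U(2) L_M PU(2) C_M by blast+
    have "P v ` U v \<inter> L v \<subseteq> {0}" using PU(2) C_Int_L[of v] by blast
    from dim_eq_dim_Int_add_dim_complement[OF U(1) subspace_L PU(1) F(1) spanF this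
        sums_qproj_image[OF U(2)]]
    show ?thesis .
  qed
  then show ?thesis using that[OF U' V] by (simp add: dimvec_def vec_eq_iff)
qed

end

theorem proposition4p9:
  fixes smul :: "'k::field_char_0 \<Rightarrow> 'm::ab_group_add \<Rightarrow> 'm"
    and src tgt :: "'e::finite \<Rightarrow> 'q::finite"
    and I :: "('q \<times> 'q \<times> 'e list \<Rightarrow> 'k) set"
    and M L :: "'q \<Rightarrow> 'm set"
    and phi :: "'e \<Rightarrow> 'm \<Rightarrow> 'm"
  assumes alg_closed: "\<forall>p :: 'k poly. degree p > 0 \<longrightarrow> (\<exists>x. poly p x = 0)"
    and vs: "vector_space smul"
    and adm: "admissible_ideal src tgt I"
    and rep: "is_rep smul src tgt I M phi"
    and vert: "vertex_subrep smul src tgt M phi L"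
  shows "normal_cone smul src tgt M phi (dimvec smul L) =
           normal_cone smul src tgt (qspace smul M L) (qmap smul tgt M phi L) 0
         \<inter> normal_cone smul src tgt L phi (dimvec smul L)"
proof -
  interpret quiver_rep_with_subrep smul src tgt M L phi
    using vs rep vert unfolding is_rep_def vertex_subrep_def
    by (intro quiver_rep_with_subrep.intro quiver_rep_with_subrep_axioms.intro) simp_all
  show ?thesis
  proof (intro set_eqI iffI)
    fix d assume d: "d \<in> normal_cone smul src tgt M phi (dimvec smul L)"
    have "d \<bullet> dimvec smul V \<le> 0" if V: "subrep smul src tgt C Q V" for V
    proof -
      obtain W where W: "subrep smul src tgt M phi W"
        "dimvec smul W = dimvec smul V + dimvec smul L"
        using lift_quotient_subrep[OF V] .
      have "d \<bullet> dimvec smul W \<le> d \<bullet> dimvec smul L" using d W(1) by (simp add: normal_cone_iff_subrep)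
      then show ?thesis unfolding W(2) by (simp add: inner_add_right)
    qed
    then show "d \<in> normal_cone smul src tgt C Q 0 \<inter> normal_cone smul src tgt L phi (dimvec smul L)"
      using d subrep_of_subrep_L by (simp add: normal_cone_iff_subrep)
  next
    fix d assume d: "d \<in> normal_cone smul src tgt C Q 0 \<inter> normal_cone smul src tgt L phi (dimvec smul L)"
    have "d \<bullet> dimvec smul U \<le> d \<bullet> dimvec smul L" if U: "subrep smul src tgt M phi U" for U
    proof -
      obtain U' V where "subrep smul src tgt L phi U'" "subrep smul src tgt C Q V"
        "dimvec smul U = dimvec smul U' + dimvec smul V"
        using split_subrep[OF U] .
      then show ?thesis using d by (fastforce simp: normal_cone_iff_subrep inner_add_right)
    qed
    then show "d \<in> normal_cone smul src tgt M phi (dimvec smul L)"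
      by (simp add: normal_cone_iff_subrep)
  qed
qed

end
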